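(* Let $P$ be a minimal Fano polytope in $\mathbb{R}^3$ with vertex set $\{x_1,x_2,x_3,x_4,x_5\}$ such that $x_2,x_3,x_4,x_5$ are coplanar and are the vertices of a parallelogram. Then, up to the action of $GL(3,\mathbb{Z})$, $P$ is the convex hull of $\{(1,0,0),(0,1,0),(-1,-1,0),(1,1,1),(0,0,-1)\}$.
   Context: A Fano polytope is a convex polytope $P\subset\mathbb{R}^3$ with vertices in $\mathbb{Z}^3$ such that the only lattice point of $P$ that is not a vertex is the origin, which lies strictly in the interior of $P$. A Fano polytope with vertex set $\{x_1,\ldots,x_k\}$ is minimal if for every $j$ the convex hull of $\{x_1,\ldots,x_k\}\setminus\{x_j\}$ is not a Fano polytope. *)

theory Defs
  imports "HOL-Analysis.Analysis"
begin

definition lattice3 :: "(real^3) set" where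
  "lattice3 = {x. \<forall>i. x $ i \<in> \<int>}"

definition vertices :: "(real^3) set \<Rightarrow> (real^3) set" where
  "vertices P = {v. v extreme_point_of P}"

definition fano :: "(real^3) set \<Rightarrow> bool" where
  "fano P \<longleftrightarrow> polytope P \<and> vertices P \<subseteq> lattice3 \<and>
     P \<inter> lattice3 = vertices P \<union> {0} \<and> 0 \<in> interior P"

definition minimal_fano :: "(real^3) set \<Rightarrow> bool" where
  "minimal_fano V \<longleftrightarrow> finite V \<and> fano (convex hull V) \<and> vertices (convex hull V) = V \<and>
     (\<forall>x\<in>V. \<not> fano (convex hull (V - {x})))"

definition parallelogram :: "real^3 \<Rightarrow> real^3 \<Rightarrow> real^3 \<Rightarrow> real^3 \<Rightarrow> bool" where
  "parallelogram a b c d \<longleftrightarrow> a + c = b + d \<and> \<not> collinear {a, b, c}"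

text \<open>GL(3,Z): integer matrices with integer inverse, i.e. determinant +-1.\<close>
definition GL3Z :: "(real^3^3) set" where
  "GL3Z = {A. (\<forall>i j. A $ i $ j \<in> \<int>) \<and> \<bar>det A\<bar> = 1}"

end

theory Submission
  imports Defs
begin

text \<open>Write the vertices as w, a, a + p, a + p + q, a + q. The origin is interior to P but, by
  minimality, not interior to any of the tetrahedra obtained by dropping a base vertex; hence it lies
  on the line through w and the centre of the parallelogram, i.e. w = -\<mu>(2a + p + q) with \<mu> > 0.
  Then the pyramid over the parallelogram with apex 0 lies in P and contains no lattice points other
  than its vertices. Reducing lattice points modulo p and q, and comparing their heights over the
  base plane, shows that a, p, q is a basis of Z^3. Consequently \<mu> is an integer, and the lattice
  point -(2a + p + q) on the segment [0, w] forces \<mu> = 1. The matrix sending a, p, q to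
  (1,0,0), (0,1,1), (-1,0,-1) lies in GL(3,Z) and maps P onto the standard polytope.\<close>

section \<open>Lattice bases and unimodular matrices\<close>

definition integer_combinations :: "real^3 \<Rightarrow> real^3 \<Rightarrow> real^3 \<Rightarrow> (real^3) set" where
  "integer_combinations a p q =
     {k0 *\<^sub>R a + k1 *\<^sub>R p + k2 *\<^sub>R q | k0 k1 k2. k0 \<in> \<int> \<and> k1 \<in> \<int> \<and> k2 \<in> \<int>}"

lemma lattice3_add: "x \<in> lattice3 \<Longrightarrow> y \<in> lattice3 \<Longrightarrow> x + y \<in> lattice3"
  by (simp add: lattice3_def)

lemma lattice3_diff: "x \<in> lattice3 \<Longrightarrow> y \<in> lattice3 \<Longrightarrow> x - y \<in> lattice3"
  by (simp add: lattice3_def)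

lemma lattice3_uminus: "x \<in> lattice3 \<Longrightarrow> - x \<in> lattice3"
  by (simp add: lattice3_def)

lemma lattice3_scaleR: "k \<in> \<int> \<Longrightarrow> x \<in> lattice3 \<Longrightarrow> k *\<^sub>R x \<in> lattice3"
  by (simp add: lattice3_def)

lemma zero_in_lattice3: "0 \<in> lattice3"
  by (simp add: lattice3_def)

lemma inner_lattice3_Ints: "x \<in> lattice3 \<Longrightarrow> y \<in> lattice3 \<Longrightarrow> x \<bullet> y \<in> \<int>"
  by (simp add: lattice3_def inner_vec_def sum_3)

lemma cross3_lattice3: "x \<in> lattice3 \<Longrightarrow> y \<in> lattice3 \<Longrightarrow> cross3 x y \<in> lattice3"
  unfolding lattice3_def forall_3 by (simp add: cross3_def)

lemma Ints_abs_mult_eq_1: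
  fixes x y :: real
  assumes "x \<in> \<int>" "y \<in> \<int>" "\<bar>x * y\<bar> = 1"
  shows "\<bar>x\<bar> = 1"
proof -
  obtain i j where "x = of_int i" "y = of_int j" using assms(1,2) by (auto elim!: Ints_cases)
  then have "\<bar>i * j\<bar> = 1" using assms(3) by (metis of_int_abs of_int_eq_1_iff of_int_mult)
  then have "\<bar>i\<bar> = 1" by (auto simp: abs_mult zmult_eq_1_iff)
  then show ?thesis using \<open>x = of_int i\<close> by simp
qed

lemma triple_product_expansion:
  fixes a p q x :: "real^3"
  shows "(a \<bullet> cross3 p q) *\<^sub>R x = (x \<bullet> cross3 p q) *\<^sub>R a + (x \<bullet> cross3 q a) *\<^sub>R p + (x \<bullet> cross3 a p) *\<^sub>R q"
  unfolding vec_eq_iff forall_3 by (simp add: cross3_def inner_vec_def sum_3) algebra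

lemma triple_product_rotate:
  fixes a p q :: "real^3"
  shows "p \<bullet> cross3 q a = a \<bullet> cross3 p q" "q \<bullet> cross3 a p = a \<bullet> cross3 p q"
  by (simp_all add: cross3_simps)

text \<open>By Cramer's rule the coordinates of x in a basis a, p, q are x \<bullet> (p \<times> q), x \<bullet> (q \<times> a) and
  x \<bullet> (a \<times> p), each divided by a \<bullet> (p \<times> q); \<open>basis_map\<close> sends them to the same combination of
  a', p', q'.\<close>
definition basis_map :: "real^3 \<Rightarrow> real^3 \<Rightarrow> real^3 \<Rightarrow> real^3 \<Rightarrow> real^3 \<Rightarrow> real^3 \<Rightarrow> real^3^3" where
  "basis_map a p q a' p' q' =
     (\<chi> i j. (a'$i * cross3 p q $ j + p'$i * cross3 q a $ j + q'$i * cross3 a p $ j) / (a \<bullet> cross3 p q))"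

lemma basis_map_apply:
  "basis_map a p q a' p' q' *v x =
     (1 / (a \<bullet> cross3 p q)) *\<^sub>R ((x \<bullet> cross3 p q) *\<^sub>R a' + (x \<bullet> cross3 q a) *\<^sub>R p' + (x \<bullet> cross3 a p) *\<^sub>R q')"
  unfolding vec_eq_iff
  by (simp add: basis_map_def matrix_vector_mult_def inner_vec_def sum_divide_distrib
      add_divide_distrib sum.distrib sum_distrib_left algebra_simps)

lemma basis_map_basis:
  assumes "a \<bullet> cross3 p q \<noteq> 0"
  shows "basis_map a p q a' p' q' *v a = a'" "basis_map a p q a' p' q' *v p = p'"
    "basis_map a p q a' p' q' *v q = q'"
  using assms triple_product_rotate[of a p q] by (simp_all add: basis_map_apply dot_cross_self)

lemma basis_map_combination:
  assumes "a \<bullet> cross3 p q \<noteq> 0"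
  shows "basis_map a p q a' p' q' *v (k0 *\<^sub>R a + k1 *\<^sub>R p + k2 *\<^sub>R q) = k0 *\<^sub>R a' + k1 *\<^sub>R p' + k2 *\<^sub>R q'"
  using basis_map_basis[OF assms] by (simp add: matrix_vector_right_distrib matrix_vector_mult_scaleR)

lemma basis_map_in_GL3Z:
  assumes lat: "a \<in> lattice3" "p \<in> lattice3" "q \<in> lattice3"
    and lat': "a' \<in> lattice3" "p' \<in> lattice3" "q' \<in> lattice3"
    and gen: "lattice3 \<subseteq> integer_combinations a p q"
    and D: "a \<bullet> cross3 p q \<noteq> 0" and D': "\<bar>a' \<bullet> cross3 p' q'\<bar> = 1"
  shows "basis_map a p q a' p' q' \<in> GL3Z"
proof -
  define A where "A = basis_map a p q a' p' q'"
  have entries: "A $ i $ j \<in> \<int>" for i j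
  proof -
    have "axis j 1 \<in> lattice3" by (simp add: lattice3_def axis_def)
    then obtain k0 k1 k2 where k: "k0 \<in> \<int>" "k1 \<in> \<int>" "k2 \<in> \<int>"
      and ax: "axis j 1 = k0 *\<^sub>R a + k1 *\<^sub>R p + k2 *\<^sub>R q"
      using gen by (auto simp: integer_combinations_def)
    have "A *v axis j 1 = k0 *\<^sub>R a' + k1 *\<^sub>R p' + k2 *\<^sub>R q'"
      unfolding ax A_def using D by (rule basis_map_combination)
    also have "\<dots> \<in> lattice3" using k lat' by (intro lattice3_add lattice3_scaleR)
    finally show ?thesis by (simp add: lattice3_def matrix_vector_mult_basis column_def)
  qed
  \<comment> \<open>A linear map multiplies triple products by its determinant.\<close>
  have "a' \<bullet> cross3 p' q' = a \<bullet> (transpose A *v cross3 (A *v p) (A *v q))"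
    using basis_map_basis[OF D] unfolding A_def
    by (metis dot_lmul_matrix inner_commute transpose_matrix_vector)
  also have "\<dots> = det A * (a \<bullet> cross3 p q)" by (simp only: cross_matrix_mult inner_scaleR_right)
  finally have "\<bar>det A * (a \<bullet> cross3 p q)\<bar> = 1" using D' by simp
  moreover have "det A \<in> \<int>" unfolding det_3 using entries by (intro Ints_add Ints_diff Ints_mult)
  moreover have "a \<bullet> cross3 p q \<in> \<int>" using lat by (simp add: inner_lattice3_Ints cross3_lattice3)
  ultimately have "\<bar>det A\<bar> = 1" by (rule Ints_abs_mult_eq_1[rotated -1])
  then show ?thesis using entries by (simp add: GL3Z_def A_def)
qed

section \<open>Convex geometry of the pyramid\<close>

lemma zero_in_interior_convex_hull_halfspace:
  fixes V :: "'a::euclidean_space set"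
  assumes "0 \<in> interior (convex hull V)" "\<forall>v\<in>V. 0 \<le> g \<bullet> v + k" "g \<noteq> 0"
  shows "0 < k"
proof -
  have "convex hull V \<subseteq> {x. g \<bullet> x \<ge> - k}"
    using assms(2) by (intro hull_minimal) (auto simp: convex_halfspace_ge)
  then have "interior (convex hull V) \<subseteq> {x. g \<bullet> x > - k}"
    using interior_mono interior_halfspace_ge[OF assms(3)] by metis
  then show ?thesis using assms(1) by auto
qed

lemma convex_combination4_in_hull:
  assumes "0 \<le> l0" "0 \<le> l1" "0 \<le> l2" "0 \<le> l3" "l0 + l1 + l2 + l3 = 1"
  shows "l0 *\<^sub>R v0 + l1 *\<^sub>R v1 + l2 *\<^sub>R v2 + l3 *\<^sub>R v3 \<in> convex hull {v0, v1, v2, v3}"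
proof -
  define l where "l = (\<lambda>i::nat. if i = 0 then l0 else if i = 1 then l1 else if i = 2 then l2 else l3)"
  define v where "v = (\<lambda>i::nat. if i = 0 then v0 else if i = 1 then v1 else if i = 2 then v2 else v3)"
  have "(\<Sum>i<4. l i *\<^sub>R v i) \<in> convex hull {v0, v1, v2, v3}"
    using assms by (intro convex_sum) (auto simp: l_def v_def lessThan_nat_numeral intro: hull_inc)
  then show ?thesis by (simp add: l_def v_def lessThan_nat_numeral add_ac)
qed

lemma zero_in_interior_tetrahedron:
  fixes v0 v1 v2 v3 :: "real^3"
  defines "u1 \<equiv> v1 - v0" and "u2 \<equiv> v2 - v0" and "u3 \<equiv> v3 - v0"
  assumes T: "u1 \<bullet> cross3 u2 u3 \<noteq> 0"
    and l: "0 < l1" "0 < l2" "0 < l3" "l1 + l2 + l3 < 1"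
    and zero: "v0 + l1 *\<^sub>R u1 + l2 *\<^sub>R u2 + l3 *\<^sub>R u3 = 0"
  shows "0 \<in> interior (convex hull {v0, v1, v2, v3})"
proof -
  define T where "T = u1 \<bullet> cross3 u2 u3"
  define c1 where "c1 x = (x - v0) \<bullet> cross3 u2 u3 / T" for x
  define c2 where "c2 x = (x - v0) \<bullet> cross3 u3 u1 / T" for x
  define c3 where "c3 x = (x - v0) \<bullet> cross3 u1 u2 / T" for x
  define U where "U = {x. 0 < c1 x \<and> 0 < c2 x \<and> 0 < c3 x \<and> c1 x + c2 x + c3 x < 1}"
  have "open U"
    unfolding U_def c1_def c2_def c3_def Collect_conj_eq
    by (intro open_Int open_Collect_less continuous_intros) (use T in \<open>auto simp: T_def\<close>)
  moreover have "c1 0 = l1" "c2 0 = l2" "c3 0 = l3"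
  proof -
    have "0 - v0 = l1 *\<^sub>R u1 + l2 *\<^sub>R u2 + l3 *\<^sub>R u3"
      by (subst zero[symmetric]) simp
    then show "c1 0 = l1" "c2 0 = l2" "c3 0 = l3"
      using T triple_product_rotate[of u1 u2 u3]
      by (simp_all add: c1_def c2_def c3_def T_def inner_add_left dot_cross_self)
  qed
  then have "0 \<in> U" using l by (simp add: U_def)
  moreover have "U \<subseteq> convex hull {v0, v1, v2, v3}"
  proof
    fix x assume "x \<in> U"
    then have pos: "0 < c1 x" "0 < c2 x" "0 < c3 x" "c1 x + c2 x + c3 x < 1" by (auto simp: U_def)
    have "T *\<^sub>R (x - v0) = T *\<^sub>R (c1 x *\<^sub>R u1 + c2 x *\<^sub>R u2 + c3 x *\<^sub>R u3)"
      using triple_product_expansion[of u1 u2 u3 "x - v0"] T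
      by (simp add: T_def c1_def c2_def c3_def scaleR_add_right)
    then have "x - v0 = c1 x *\<^sub>R u1 + c2 x *\<^sub>R u2 + c3 x *\<^sub>R u3"
      using T by (simp add: T_def)
    then have "x = (1 - c1 x - c2 x - c3 x) *\<^sub>R v0 + c1 x *\<^sub>R v1 + c2 x *\<^sub>R v2 + c3 x *\<^sub>R v3"
      by (simp add: u1_def u2_def u3_def algebra_simps)
    also have "\<dots> \<in> convex hull {v0, v1, v2, v3}"
      using pos by (intro convex_combination4_in_hull) auto
    finally show "x \<in> convex hull {v0, v1, v2, v3}" .
  qed
  ultimately show ?thesis using interiorI by blast
qed

lemma parallelogram_point_in_hull:
  fixes a p q :: "'a::real_vector"
  assumes "0 \<le> \<beta>" "\<beta> \<le> 1" "0 \<le> \<gamma>" "\<gamma> \<le> 1"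
  shows "a + \<beta> *\<^sub>R p + \<gamma> *\<^sub>R q \<in> convex hull {a, a + p, a + p + q, a + q}"
proof -
  let ?H = "convex hull {a, a + p, a + p + q, a + q}"
  have edge1: "(1 - \<beta>) *\<^sub>R a + \<beta> *\<^sub>R (a + p) \<in> ?H"
    and edge2: "(1 - \<beta>) *\<^sub>R (a + q) + \<beta> *\<^sub>R (a + p + q) \<in> ?H"
    using assms by (intro convexD convex_convex_hull hull_inc; simp)+
  have "(1 - \<gamma>) *\<^sub>R ((1 - \<beta>) *\<^sub>R a + \<beta> *\<^sub>R (a + p))
      + \<gamma> *\<^sub>R ((1 - \<beta>) *\<^sub>R (a + q) + \<beta> *\<^sub>R (a + p + q)) \<in> ?H"
    by (rule convexD[OF convex_convex_hull edge1 edge2]) (use assms in auto)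
  then show ?thesis by (simp add: algebra_simps)
qed

lemma pyramid_point_in_hull:
  fixes a p q :: "'a::real_vector"
  assumes "0 \<le> \<beta>" "\<beta> \<le> t" "0 \<le> \<gamma>" "\<gamma> \<le> t" "t \<le> 1"
  shows "t *\<^sub>R a + \<beta> *\<^sub>R p + \<gamma> *\<^sub>R q \<in> convex hull {0, a, a + p, a + p + q, a + q}"
proof (cases "t = 0")
  case True
  then show ?thesis using assms by (simp add: hull_inc)
next
  case False
  then have "t > 0" using assms by linarith
  have "a + (\<beta> / t) *\<^sub>R p + (\<gamma> / t) *\<^sub>R q \<in> convex hull {a, a + p, a + p + q, a + q}"
    using assms \<open>t > 0\<close> by (intro parallelogram_point_in_hull) auto
  also have "\<dots> \<subseteq> convex hull {0, a, a + p, a + p + q, a + q}" by (intro hull_mono) auto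
  finally have "(1 - t) *\<^sub>R 0 + t *\<^sub>R (a + (\<beta> / t) *\<^sub>R p + (\<gamma> / t) *\<^sub>R q)
      \<in> convex hull {0, a, a + p, a + p + q, a + q}"
    using assms \<open>t > 0\<close> by (intro convexD) (auto intro: hull_inc)
  then show ?thesis using \<open>t > 0\<close> by (simp add: scaleR_add_right)
qed

lemma reflected_centre_not_in_pyramid:
  fixes a p q :: "real^3"
  assumes D: "a \<bullet> cross3 p q \<noteq> 0" and \<mu>: "0 < \<mu>"
  shows "- \<mu> *\<^sub>R (2 *\<^sub>R a + p + q) \<notin> convex hull {0, a, a + p, a + p + q, a + q}"
proof
  define g where "g = (a \<bullet> cross3 p q) *\<^sub>R cross3 p q"
  assume "- \<mu> *\<^sub>R (2 *\<^sub>R a + p + q) \<in> convex hull {0, a, a + p, a + p + q, a + q}"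
  moreover have "convex hull {0, a, a + p, a + p + q, a + q} \<subseteq> {x. g \<bullet> x \<ge> 0}"
    by (intro hull_minimal convex_halfspace_ge)
      (auto simp: g_def inner_add_right dot_cross_self inner_commute)
  ultimately have "0 \<le> g \<bullet> (- \<mu> *\<^sub>R (2 *\<^sub>R a + p + q))" by blast
  moreover have "g \<bullet> (- \<mu> *\<^sub>R (2 *\<^sub>R a + p + q)) = - 2 * (\<mu> * ((a \<bullet> cross3 p q) * (a \<bullet> cross3 p q)))"
    by (simp add: g_def inner_add_right dot_cross_self inner_commute)
  moreover have "0 < \<mu> * ((a \<bullet> cross3 p q) * (a \<bullet> cross3 p q))"
    using \<mu> D not_real_square_gt_zero by (blast intro: mult_pos_pos)
  ultimately show False by linarith
qed

lemma minimal_fano_not_interior: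
  assumes "minimal_fano V" "y \<in> V"
  shows "0 \<notin> interior (convex hull (V - {y}))"
proof
  assume int: "0 \<in> interior (convex hull (V - {y}))"
  let ?P = "convex hull V" and ?Q = "convex hull (V - {y})"
  have fin: "finite V" and fa: "fano ?P" and vert: "vertices ?P = V"
    using assms(1) by (simp_all add: minimal_fano_def)
  have ext: "v extreme_point_of ?P" if "v \<in> V" for v
    using vert that by (auto simp: vertices_def)
  have latV: "V \<subseteq> lattice3" and PL: "?P \<inter> lattice3 = V \<union> {0}"
    using fa vert by (auto simp: fano_def)
  have QP: "?Q \<subseteq> ?P" by (intro hull_mono) auto
  have vQ: "vertices ?Q \<subseteq> V - {y}"
    unfolding vertices_def using extreme_point_of_convex_hull by blast
  have "?Q \<inter> lattice3 \<subseteq> vertices ?Q \<union> {0}"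
  proof
    fix z assume z: "z \<in> ?Q \<inter> lattice3"
    show "z \<in> vertices ?Q \<union> {0}"
    proof (cases "z \<in> V")
      case True
      then have "z extreme_point_of ?Q" using ext z QP by (auto simp: extreme_point_of_def)
      then show ?thesis by (simp add: vertices_def)
    qed (use z PL QP in blast)
  qed
  moreover have "vertices ?Q \<subseteq> ?Q" by (auto simp: vertices_def extreme_point_of_def)
  ultimately have "?Q \<inter> lattice3 = vertices ?Q \<union> {0}"
    using vQ latV int interior_subset zero_in_lattice3 by blast
  moreover have "polytope ?Q" using fin by (auto simp: polytope_def)
  ultimately have "fano ?Q" using vQ latV int by (auto simp: fano_def)
  then show False using assms by (simp add: minimal_fano_def)
qed

lemma pyramid_interior_coordinates:
  fixes w a p q :: "real^3"
  assumes int: "0 \<in> interior (convex hull {w, a, a + p, a + p + q, a + q})"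
    and n0: "cross3 p q \<noteq> 0"
  shows "p \<bullet> cross3 q (w - a) \<noteq> 0"
    and "\<exists>s t r. a + s *\<^sub>R p + t *\<^sub>R q + r *\<^sub>R (w - a) = 0 \<and> 0 < s \<and> 0 < t \<and> 0 < r \<and> r + s < 1 \<and> r + t < 1"
proof -
  define u where "u = w - a"
  define n where "n = cross3 p q"
  define C1 where "C1 = cross3 q u"
  define C2 where "C2 = cross3 u p"
  define \<Delta> where "\<Delta> = p \<bullet> C1"
  have facet: "0 < c - g \<bullet> a"
    if "g \<noteq> 0" "0 \<le> c" "0 \<le> c + g \<bullet> p" "0 \<le> c + g \<bullet> p + g \<bullet> q" "0 \<le> c + g \<bullet> q" "0 \<le> c + g \<bullet> u"
    for g c
    by (rule zero_in_interior_convex_hull_halfspace[OF int _ that(1)])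
      (use that in \<open>auto simp: u_def inner_add_right inner_diff_right\<close>)
  have ortho: "n \<bullet> p = 0" "n \<bullet> q = 0" "C1 \<bullet> q = 0" "C1 \<bullet> u = 0" "C2 \<bullet> p = 0" "C2 \<bullet> u = 0"
    by (simp_all add: n_def C1_def C2_def dot_cross_self)
  have diag: "C1 \<bullet> p = \<Delta>" "C2 \<bullet> q = \<Delta>" "n \<bullet> u = \<Delta>"
    using triple_product_rotate[of p q u] by (simp_all add: \<Delta>_def C1_def C2_def n_def inner_commute)
  show \<Delta>: "p \<bullet> cross3 q (w - a) \<noteq> 0"
  proof
    assume "p \<bullet> cross3 q (w - a) = 0"
    then have "n \<bullet> u = 0" using diag by (simp add: \<Delta>_def C1_def u_def)
    then have "0 < - (n \<bullet> a)" "0 < n \<bullet> a"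
      using facet[of n 0] facet[of "- n" 0] n0 ortho by (simp_all add: n_def)
    then show False by simp
  qed
  then have \<Delta>0: "\<Delta> \<noteq> 0" by (simp add: \<Delta>_def C1_def u_def)
  define s where "s = - (C1 \<bullet> a) / \<Delta>"
  define t where "t = - (C2 \<bullet> a) / \<Delta>"
  define r where "r = - (n \<bullet> a) / \<Delta>"
  have "\<Delta> *\<^sub>R a = (C1 \<bullet> a) *\<^sub>R p + (C2 \<bullet> a) *\<^sub>R q + (n \<bullet> a) *\<^sub>R u"
    using triple_product_expansion[of p q u a]
    by (simp add: \<Delta>_def C1_def C2_def n_def inner_commute)
  then have zero: "a + s *\<^sub>R p + t *\<^sub>R q + r *\<^sub>R u = 0"
    using \<Delta>0 by (simp add: s_def t_def r_def vec_eq_iff field_simps)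
  have nz: "C1 \<noteq> 0" "C2 \<noteq> 0" "n \<noteq> 0" using diag \<Delta>0 by auto
  have pos: "0 < s" "0 < t" "0 < r"
    using facet[of "C1 /\<^sub>R \<Delta>" 0] facet[of "C2 /\<^sub>R \<Delta>" 0] facet[of "n /\<^sub>R \<Delta>" 0] \<Delta>0 nz ortho diag
    by (simp_all add: s_def t_def r_def divide_inverse_commute)
  have less: "r + s < 1" "r + t < 1"
  proof -
    have "(n + C1) \<bullet> p = \<Delta>" "(n + C2) \<bullet> q = \<Delta>" using ortho diag by (simp_all add: inner_add_left)
    then have "- n \<noteq> C1" "- n \<noteq> C2" using \<Delta>0 by auto
    then have "0 < 1 - (- (n + C1) /\<^sub>R \<Delta>) \<bullet> a" "0 < 1 - (- (n + C2) /\<^sub>R \<Delta>) \<bullet> a"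
      using \<Delta>0 ortho diag by (intro facet; simp add: inner_diff_left)+
    then show "r + s < 1" "r + t < 1"
      by (simp_all add: r_def s_def t_def divide_inverse_commute algebra_simps)
  qed
  show "\<exists>s t r. a + s *\<^sub>R p + t *\<^sub>R q + r *\<^sub>R (w - a) = 0 \<and> 0 < s \<and> 0 < t \<and> 0 < r \<and> r + s < 1 \<and> r + t < 1"
    using zero pos less unfolding u_def by blast
qed

text \<open>Each diagonal of the base splits the pyramid into two tetrahedra with apex w. If the origin
  is interior to neither of them, it lies on the plane through w and that diagonal.\<close>

lemma zero_not_in_tetrahedra_sum_eq_1:
  fixes w a p q :: "real^3"
  assumes \<Delta>: "p \<bullet> cross3 q (w - a) \<noteq> 0"
    and zero: "a + s *\<^sub>R p + t *\<^sub>R q + r *\<^sub>R (w - a) = 0"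
    and pos: "0 < s" "0 < t" "0 < r" "r + s < 1" "r + t < 1"
    and out: "0 \<notin> interior (convex hull {a, a + p, a + q, w})"
      "0 \<notin> interior (convex hull {a + p + q, a + p, a + q, w})"
  shows "s + t + r = 1"
proof -
  have "\<not> s + t + r < 1"
  proof
    assume "s + t + r < 1"
    have "0 \<in> interior (convex hull {a, a + p, a + q, w})"
    proof (rule zero_in_interior_tetrahedron[of _ _ _ _ s t r])
      show "(a + p - a) \<bullet> cross3 (a + q - a) (w - a) \<noteq> 0" using \<Delta> by simp
      show "a + s *\<^sub>R (a + p - a) + t *\<^sub>R (a + q - a) + r *\<^sub>R (w - a) = 0" using zero by simp
    qed (use pos \<open>s + t + r < 1\<close> in auto)
    with out(1) show False by blast
  qed
  moreover have "\<not> s + t + r > 1"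
  proof
    assume "s + t + r > 1"
    have "0 \<in> interior (convex hull {a + p + q, a + p, a + q, w})"
    proof (rule zero_in_interior_tetrahedron[of _ _ _ _ "1 - t - r" "1 - s - r" r])
      show "(a + p - (a + p + q)) \<bullet> cross3 (a + q - (a + p + q)) (w - (a + p + q)) \<noteq> 0"
        using \<Delta> by (simp add: cross3_simps)
      show "a + p + q + (1 - t - r) *\<^sub>R (a + p - (a + p + q)) + (1 - s - r) *\<^sub>R (a + q - (a + p + q))
          + r *\<^sub>R (w - (a + p + q)) = 0"
        using zero by (simp add: algebra_simps)
    qed (use pos \<open>s + t + r > 1\<close> in auto)
    with out(2) show False by blast
  qed
  ultimately show ?thesis by linarith
qed

lemma zero_not_in_tetrahedra_coords_eq:
  fixes w a p q :: "real^3"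
  assumes \<Delta>: "p \<bullet> cross3 q (w - a) \<noteq> 0"
    and zero: "a + s *\<^sub>R p + t *\<^sub>R q + r *\<^sub>R (w - a) = 0"
    and pos: "0 < s" "0 < t" "0 < r" "r + s < 1" "r + t < 1"
    and out: "0 \<notin> interior (convex hull {a, a + p, a + p + q, w})"
      "0 \<notin> interior (convex hull {a, a + q, a + p + q, w})"
  shows "s = t"
proof -
  have "\<not> s > t"
  proof
    assume "s > t"
    have "0 \<in> interior (convex hull {a, a + p, a + p + q, w})"
    proof (rule zero_in_interior_tetrahedron[of _ _ _ _ "s - t" t r])
      show "(a + p - a) \<bullet> cross3 (a + p + q - a) (w - a) \<noteq> 0" using \<Delta> by (simp add: cross3_simps)
      show "a + (s - t) *\<^sub>R (a + p - a) + t *\<^sub>R (a + p + q - a) + r *\<^sub>R (w - a) = 0"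
        using zero by (simp add: algebra_simps)
    qed (use pos \<open>s > t\<close> in auto)
    with out(1) show False by blast
  qed
  moreover have "\<not> t > s"
  proof
    assume "t > s"
    have "0 \<in> interior (convex hull {a, a + q, a + p + q, w})"
    proof (rule zero_in_interior_tetrahedron[of _ _ _ _ "t - s" s r])
      show "(a + q - a) \<bullet> cross3 (a + p + q - a) (w - a) \<noteq> 0" using \<Delta> by (simp add: cross3_simps)
      show "a + (t - s) *\<^sub>R (a + q - a) + s *\<^sub>R (a + p + q - a) + r *\<^sub>R (w - a) = 0"
        using zero by (simp add: algebra_simps)
    qed (use pos \<open>t > s\<close> in auto)
    with out(2) show False by blast
  qed
  ultimately show ?thesis by linarith
qed

lemma minimal_fano_pyramid_apex:
  fixes w a p q :: "real^3"
  assumes mf: "minimal_fano {w, a, a + p, a + p + q, a + q}"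
    and dist: "distinct [w, a, a + p, a + p + q, a + q]"
    and n0: "cross3 p q \<noteq> 0"
  shows "a \<bullet> cross3 p q \<noteq> 0" and "\<exists>\<mu>>0. w = - \<mu> *\<^sub>R (2 *\<^sub>R a + p + q)"
proof -
  let ?V = "{w, a, a + p, a + p + q, a + q}"
  have "0 \<in> interior (convex hull ?V)"
    using mf unfolding minimal_fano_def fano_def by blast
  note coords = pyramid_interior_coordinates[OF this n0]
  obtain s t r where zero: "a + s *\<^sub>R p + t *\<^sub>R q + r *\<^sub>R (w - a) = 0"
    and pos: "0 < s" "0 < t" "0 < r" "r + s < 1" "r + t < 1"
    using coords(2) by blast
  have "?V - {a + p + q} = {a, a + p, a + q, w}" "?V - {a} = {a + p + q, a + p, a + q, w}"
    "?V - {a + q} = {a, a + p, a + p + q, w}" "?V - {a + p} = {a, a + q, a + p + q, w}"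
    using dist by auto
  then have "s + t + r = 1" "s = t"
    using minimal_fano_not_interior[OF mf, of "a + p + q"] minimal_fano_not_interior[OF mf, of a]
      minimal_fano_not_interior[OF mf, of "a + q"] minimal_fano_not_interior[OF mf, of "a + p"]
    by (auto intro!: zero_not_in_tetrahedra_sum_eq_1[OF coords(1) zero pos]
        zero_not_in_tetrahedra_coords_eq[OF coords(1) zero pos])
  then have st: "t = s" "r = 1 - 2 * s" by linarith+
  have "(a + s *\<^sub>R p + t *\<^sub>R q + r *\<^sub>R (w - a)) \<bullet> cross3 p q = 0" using zero by simp
  then have "a \<bullet> cross3 p q + r * (p \<bullet> cross3 q (w - a)) = 0"
    using triple_product_rotate[of p q "w - a"] by (simp add: inner_add_left dot_cross_self)
  then show "a \<bullet> cross3 p q \<noteq> 0" using pos coords(1) by auto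
  have "r *\<^sub>R w = (a + s *\<^sub>R p + t *\<^sub>R q + r *\<^sub>R (w - a)) + (r - 1) *\<^sub>R a - s *\<^sub>R p - t *\<^sub>R q"
    by (simp add: algebra_simps)
  also have "\<dots> = (r - 1) *\<^sub>R a - s *\<^sub>R p - t *\<^sub>R q" by (simp only: zero add_0_left)
  also have "\<dots> = - s *\<^sub>R (2 *\<^sub>R a + p + q)" by (simp add: st algebra_simps)
  finally have "w = - (s / r) *\<^sub>R (2 *\<^sub>R a + p + q)"
    using pos by (simp add: vec_eq_iff field_simps)
  then show "\<exists>\<mu>>0. w = - \<mu> *\<^sub>R (2 *\<^sub>R a + p + q)"
    using pos by (intro exI[of _ "s / r"]) auto
qed

section \<open>Lattice points in an empty pyramid\<close>

lemma ceiling_minus_le: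
  fixes x h :: real
  assumes "h * x \<in> \<int>" "h \<in> \<int>" "0 < h"
  shows "of_int \<lceil>x\<rceil> - x \<le> 1 - 1 / h"
proof -
  have "h * (of_int \<lceil>x\<rceil> - 1) < h * x"
    using assms(3) ceiling_correct[of x] by (intro mult_strict_left_mono) auto
  moreover have "h * (of_int \<lceil>x\<rceil> - 1) \<in> \<int>" using assms(2) by (intro Ints_mult Ints_diff) auto
  ultimately have "h * (of_int \<lceil>x\<rceil> - 1) \<le> h * x - 1"
    using assms(1) by (auto elim!: Ints_cases simp del: of_int_diff)
  then have "of_int \<lceil>x\<rceil> - 1 \<le> (h * x - 1) / h" using assms(3) by (simp add: pos_le_divide_eq mult.commute)
  also have "\<dots> = x - 1 / h" using assms(3) by (simp add: diff_divide_distrib)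
  finally show ?thesis by simp
qed

lemma empty_pyramid_plane_lattice:
  fixes a p q z :: "real^3"
  assumes D: "a \<bullet> cross3 p q \<noteq> 0" and lat: "a \<in> lattice3" "p \<in> lattice3" "q \<in> lattice3"
    and empty: "convex hull {0, a, a + p, a + p + q, a + q} \<inter> lattice3 \<subseteq> {0, a, a + p, a + p + q, a + q}"
    and z: "z \<in> lattice3" "z \<bullet> cross3 p q = 0"
  shows "\<exists>k1 k2. k1 \<in> \<int> \<and> k2 \<in> \<int> \<and> z = k1 *\<^sub>R p + k2 *\<^sub>R q"
proof -
  define D where "D = a \<bullet> cross3 p q"
  define \<beta> where "\<beta> = z \<bullet> cross3 q a / D"
  define \<gamma> where "\<gamma> = z \<bullet> cross3 a p / D"
  have D0: "D \<noteq> 0" using D by (simp add: D_def)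
  have "D *\<^sub>R z = D *\<^sub>R (\<beta> *\<^sub>R p + \<gamma> *\<^sub>R q)"
    using triple_product_expansion[of a p q z] z(2) D0
    by (simp add: D_def \<beta>_def \<gamma>_def scaleR_add_right)
  then have zpq: "z = \<beta> *\<^sub>R p + \<gamma> *\<^sub>R q" using D0 by simp
  \<comment> \<open>Reduce z modulo p and q and move it into the base of the pyramid.\<close>
  define y where "y = a + frac \<beta> *\<^sub>R p + frac \<gamma> *\<^sub>R q"
  have "y = a + z - of_int \<lfloor>\<beta>\<rfloor> *\<^sub>R p - of_int \<lfloor>\<gamma>\<rfloor> *\<^sub>R q"
    by (simp add: y_def zpq frac_def algebra_simps)
  then have "y \<in> lattice3"
    using lat z by (auto intro!: lattice3_add lattice3_diff lattice3_scaleR)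
  moreover have "y \<in> convex hull {0, a, a + p, a + p + q, a + q}"
    using pyramid_point_in_hull[of "frac \<beta>" 1 "frac \<gamma>" a p q]
    by (simp add: y_def frac_ge_0 less_imp_le[OF frac_lt_1])
  ultimately have "y \<in> {0, a, a + p, a + p + q, a + q}" using empty by blast
  moreover have "y \<bullet> cross3 p q = D" "y \<bullet> cross3 q a = frac \<beta> * D" "y \<bullet> cross3 a p = frac \<gamma> * D"
    using triple_product_rotate[of a p q]
    by (simp_all add: y_def D_def inner_add_left dot_cross_self)
  ultimately have "frac \<beta> * D \<in> {0, D}" "frac \<gamma> * D \<in> {0, D}"
    using D0 triple_product_rotate[of a p q]
    by (auto simp: D_def inner_add_left dot_cross_self)
  then have "frac \<beta> = 0" "frac \<gamma> = 0" using D0 frac_lt_1[of \<beta>] frac_lt_1[of \<gamma>] by auto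
  then show ?thesis using zpq by (auto simp: frac_eq_0_iff)
qed

lemma lattice3_inner_multiples:
  assumes n: "n \<in> lattice3" and z0: "z0 \<in> lattice3" "0 < z0 \<bullet> n"
  shows "\<exists>g\<in>lattice3. 0 < g \<bullet> n \<and> (\<forall>z\<in>lattice3. \<exists>m\<in>\<int>. z \<bullet> n = m * (g \<bullet> n))"
proof -
  define S where "S = {k::nat. 0 < k \<and> (\<exists>z\<in>lattice3. z \<bullet> n = real k)}"
  obtain j where "z0 \<bullet> n = of_int j" using inner_lattice3_Ints[OF z0(1) n] by (auto elim: Ints_cases)
  then have "nat j \<in> S" using z0 by (auto simp: S_def)
  define e where "e = (LEAST k. k \<in> S)"
  have "e \<in> S" using \<open>nat j \<in> S\<close> unfolding e_def by (rule LeastI)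
  then obtain g where g: "g \<in> lattice3" "g \<bullet> n = real e" and e0: "0 < e" by (auto simp: S_def)
  have multiple: "\<exists>m\<in>\<int>. z \<bullet> n = m * (g \<bullet> n)" if z: "z \<in> lattice3" for z
  proof -
    obtain i where i: "z \<bullet> n = of_int i" using inner_lattice3_Ints[OF z n] by (auto elim: Ints_cases)
    define m where "m = i div int e"
    define \<rho> where "\<rho> = i mod int e"
    have \<rho>: "0 \<le> \<rho>" "\<rho> < int e" using e0 by (simp_all add: \<rho>_def)
    have "i = m * int e + \<rho>" by (simp add: m_def \<rho>_def)
    have "z - of_int m *\<^sub>R g \<in> lattice3" using z g by (auto intro!: lattice3_diff lattice3_scaleR)
    moreover have "(z - of_int m *\<^sub>R g) \<bullet> n = of_int \<rho>"
      using i g \<open>i = m * int e + \<rho>\<close> by (simp add: inner_diff_left)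
    ultimately have "\<rho> \<noteq> 0 \<Longrightarrow> nat \<rho> \<in> S" using \<rho> by (auto simp: S_def)
    then have "\<rho> = 0" using \<rho> Least_le[of "\<lambda>k. k \<in> S" "nat \<rho>"] unfolding e_def by linarith
    then show ?thesis using i g \<open>i = m * int e + \<rho>\<close> by (intro bexI[of _ "of_int m"]) auto
  qed
  show ?thesis using g e0 multiple by (intro bexI[OF _ g(1)]) auto
qed

lemma empty_pyramid_index_one:
  fixes a p q g :: "real^3"
  assumes D: "a \<bullet> cross3 p q \<noteq> 0" and lat: "a \<in> lattice3" "p \<in> lattice3" "q \<in> lattice3"
    and empty: "convex hull {0, a, a + p, a + p + q, a + q} \<inter> lattice3 \<subseteq> {0, a, a + p, a + p + q, a + q}"
    and g: "g \<in> lattice3" and h: "h \<in> \<int>" "0 < h" and k: "k1 \<in> \<int>" "k2 \<in> \<int>"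
    and hg: "h *\<^sub>R g = a + k1 *\<^sub>R p + k2 *\<^sub>R q"
  shows "h = 1"
proof (rule ccontr)
  assume "h \<noteq> 1"
  then have h2: "1 < h" using h by (auto elim!: Ints_cases)
  define c1 where "c1 = of_int \<lceil>k1 / h\<rceil> - k1 / h"
  define c2 where "c2 = of_int \<lceil>k2 / h\<rceil> - k2 / h"
  have c: "0 \<le> c1" "c1 \<le> 1 - 1 / h" "0 \<le> c2" "c2 \<le> 1 - 1 / h"
    using ceiling_minus_le[of h "k1 / h"] ceiling_minus_le[of h "k2 / h"] h k
    by (auto simp: c1_def c2_def)
  \<comment> \<open>A lattice point of the pyramid strictly between the apex 0 and the base.\<close>
  define y where "y = a - g + of_int \<lceil>k1 / h\<rceil> *\<^sub>R p + of_int \<lceil>k2 / h\<rceil> *\<^sub>R q"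
  have "y \<in> lattice3" using g lat by (auto simp: y_def intro!: lattice3_add lattice3_diff lattice3_scaleR)
  moreover have y: "y = (1 - 1 / h) *\<^sub>R a + c1 *\<^sub>R p + c2 *\<^sub>R q"
  proof -
    have "g = (1 / h) *\<^sub>R (a + k1 *\<^sub>R p + k2 *\<^sub>R q)" using hg h by (simp flip: hg)
    then show ?thesis by (simp add: y_def c1_def c2_def algebra_simps diff_divide_distrib)
  qed
  then have "y \<in> convex hull {0, a, a + p, a + p + q, a + q}"
    using c h2 by (simp add: pyramid_point_in_hull)
  ultimately have "y \<in> {0, a, a + p, a + p + q, a + q}" using empty by blast
  moreover have "y \<bullet> cross3 p q = (1 - 1 / h) * (a \<bullet> cross3 p q)"
    using y by (simp add: inner_add_left dot_cross_self)
  moreover have "0 < 1 - 1 / h" "1 - 1 / h < 1" using h2 by simp_all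
  ultimately show False using D by (auto simp: inner_add_left dot_cross_self)
qed

lemma empty_pyramid_lattice_basis:
  fixes a p q :: "real^3"
  assumes D: "a \<bullet> cross3 p q \<noteq> 0" and lat: "a \<in> lattice3" "p \<in> lattice3" "q \<in> lattice3"
    and empty: "convex hull {0, a, a + p, a + p + q, a + q} \<inter> lattice3 \<subseteq> {0, a, a + p, a + p + q, a + q}"
  shows "lattice3 \<subseteq> integer_combinations a p q"
proof
  fix z assume z: "z \<in> lattice3"
  \<comment> \<open>Heights z \<bullet> n of lattice points are multiples of the least positive one, g \<bullet> n; the empty
    pyramid forces a to have exactly that height, and then p, q handle height 0.\<close>
  define n where "n = sgn (a \<bullet> cross3 p q) *\<^sub>R cross3 p q"
  have "sgn (a \<bullet> cross3 p q) \<in> \<int>" by (simp add: sgn_real_def)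
  then have "n \<in> lattice3" using lat by (simp add: n_def lattice3_scaleR cross3_lattice3)
  moreover have "0 < a \<bullet> n" using D by (auto simp: n_def sgn_real_def)
  ultimately obtain g where g: "g \<in> lattice3" "0 < g \<bullet> n"
    and multiple: "\<forall>z\<in>lattice3. \<exists>m\<in>\<int>. z \<bullet> n = m * (g \<bullet> n)"
    using lattice3_inner_multiples lat(1) by blast
  have plane: "\<exists>k1 k2. k1 \<in> \<int> \<and> k2 \<in> \<int> \<and> x = k1 *\<^sub>R p + k2 *\<^sub>R q"
    if "x \<in> lattice3" "x \<bullet> n = 0" for x
    using empty_pyramid_plane_lattice[OF D lat empty that(1)] that(2) D by (simp add: n_def sgn_eq_0_iff)
  obtain h where h: "h \<in> \<int>" "a \<bullet> n = h * (g \<bullet> n)" using multiple lat(1) by blast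
  then have "0 < h" using \<open>0 < a \<bullet> n\<close> g(2) by (simp add: zero_less_mult_iff)
  have "h *\<^sub>R g - a \<in> lattice3" using g h lat by (intro lattice3_diff lattice3_scaleR)
  moreover have "(h *\<^sub>R g - a) \<bullet> n = 0" using h by (simp add: inner_diff_left)
  ultimately obtain k1 k2 where "k1 \<in> \<int>" "k2 \<in> \<int>" "h *\<^sub>R g - a = k1 *\<^sub>R p + k2 *\<^sub>R q"
    using plane by blast
  then have "h = 1"
    by (intro empty_pyramid_index_one[OF D lat empty g(1) h(1) \<open>0 < h\<close>]) (auto simp: algebra_simps)
  obtain m where m: "m \<in> \<int>" "z \<bullet> n = m * (a \<bullet> n)" using multiple z h \<open>h = 1\<close> by auto
  have "z - m *\<^sub>R a \<in> lattice3" using z lat m by (intro lattice3_diff lattice3_scaleR)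
  moreover have "(z - m *\<^sub>R a) \<bullet> n = 0" using m by (simp add: inner_diff_left)
  ultimately obtain k1 k2 where "k1 \<in> \<int>" "k2 \<in> \<int>" "z - m *\<^sub>R a = k1 *\<^sub>R p + k2 *\<^sub>R q"
    using plane by blast
  then have "z = m *\<^sub>R a + k1 *\<^sub>R p + k2 *\<^sub>R q" by (simp add: algebra_simps)
  then show "z \<in> integer_combinations a p q"
    using m \<open>k1 \<in> \<int>\<close> \<open>k2 \<in> \<int>\<close> by (auto simp: integer_combinations_def)
qed

lemma apex_multiplier_eq_1:
  fixes a p q :: "real^3" and \<mu> :: real
  defines "w \<equiv> - \<mu> *\<^sub>R (2 *\<^sub>R a + p + q)"
  assumes D: "a \<bullet> cross3 p q \<noteq> 0" and lat: "a \<in> lattice3" "p \<in> lattice3" "q \<in> lattice3"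
    and gen: "lattice3 \<subseteq> integer_combinations a p q"
    and \<mu>: "0 < \<mu>" and w: "w \<in> lattice3"
    and seg: "closed_segment 0 w \<inter> lattice3 \<subseteq> {0, w, a, a + p, a + p + q, a + q}"
  shows "\<mu> = 1"
proof (rule ccontr)
  assume "\<mu> \<noteq> 1"
  define D where "D = a \<bullet> cross3 p q"
  obtain k0 k1 k2 where k: "k1 \<in> \<int>" and wk: "w = k0 *\<^sub>R a + k1 *\<^sub>R p + k2 *\<^sub>R q"
    using w gen by (auto simp: integer_combinations_def)
  have "w \<bullet> cross3 q a = k1 * D" by (simp add: wk D_def cross3_simps)
  moreover have "w \<bullet> cross3 q a = (- \<mu>) * D" by (simp add: w_def D_def cross3_simps)
  ultimately have "- \<mu> = k1" using D mult_right_cancel unfolding D_def by metis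
  then have "\<mu> \<in> \<int>" using k by (metis Ints_minus minus_minus)
  then have "2 \<le> \<mu>" using \<mu> \<open>\<mu> \<noteq> 1\<close> by (auto elim!: Ints_cases)
  define y where "y = - (2 *\<^sub>R a + p + q)"
  have "y = (1 - 1 / \<mu>) *\<^sub>R 0 + (1 / \<mu>) *\<^sub>R w" using \<mu> by (simp add: y_def w_def)
  then have "y \<in> closed_segment 0 w"
    using \<open>2 \<le> \<mu>\<close> unfolding in_segment by (intro conjI exI[of _ "1 / \<mu>"]) auto
  moreover have "y \<in> lattice3"
    unfolding y_def using lat by (intro lattice3_uminus lattice3_add lattice3_scaleR) auto
  ultimately have "y \<in> {0, w, a, a + p, a + p + q, a + q}" using seg by blast
  moreover have "y \<bullet> cross3 p q = - 2 * D" "w \<bullet> cross3 p q = - 2 * \<mu> * D"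
    by (simp_all add: y_def w_def D_def inner_add_left inner_diff_left dot_cross_self)
  ultimately show False
    using D \<open>\<mu> \<noteq> 1\<close> by (auto simp: D_def inner_add_left dot_cross_self)
qed

section \<open>The minimal Fano pyramid\<close>

lemma minimal_fano_pyramid_basis_apex:
  fixes w a p q :: "real^3"
  assumes mf: "minimal_fano {w, a, a + p, a + p + q, a + q}"
    and dist: "distinct [w, a, a + p, a + p + q, a + q]"
    and n0: "cross3 p q \<noteq> 0"
  shows "a \<in> lattice3 \<and> p \<in> lattice3 \<and> q \<in> lattice3 \<and> a \<bullet> cross3 p q \<noteq> 0
    \<and> lattice3 \<subseteq> integer_combinations a p q \<and> w = - (2 *\<^sub>R a + p + q)"
proof -
  let ?V = "{w, a, a + p, a + p + q, a + q}" and ?B = "{0, a, a + p, a + p + q, a + q}"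
  let ?P = "convex hull ?V"
  have "fano ?P" "vertices ?P = ?V" using mf unfolding minimal_fano_def by blast+
  then have fano: "?P \<inter> lattice3 = ?V \<union> {0}" "?V \<subseteq> lattice3" "0 \<in> ?P"
    using interior_subset unfolding fano_def by (metis, metis, blast)
  then have lat: "w \<in> lattice3" "a \<in> lattice3" "p \<in> lattice3" "q \<in> lattice3"
    using lattice3_diff[of "a + p" a] lattice3_diff[of "a + q" a] by simp_all
  have D: "a \<bullet> cross3 p q \<noteq> 0" by (rule minimal_fano_pyramid_apex(1)[OF mf dist n0])
  obtain \<mu> where \<mu>: "0 < \<mu>" and w: "w = - \<mu> *\<^sub>R (2 *\<^sub>R a + p + q)"
    using minimal_fano_pyramid_apex(2)[OF mf dist n0] by blast
  have "w \<notin> convex hull ?B" unfolding w using D \<mu> by (rule reflected_centre_not_in_pyramid)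
  moreover have "convex hull ?B \<subseteq> ?P" using fano(3) by (intro hull_minimal) (auto intro: hull_inc)
  ultimately have "convex hull ?B \<inter> lattice3 \<subseteq> ?B" using fano(1) by auto
  then have gen: "lattice3 \<subseteq> integer_combinations a p q"
    using D lat by (intro empty_pyramid_lattice_basis)
  have "closed_segment 0 w \<subseteq> ?P" using fano(3) by (intro closed_segment_subset) (auto intro: hull_inc)
  then have "\<mu> = 1"
    using D lat gen \<mu> fano(1) unfolding w by (intro apex_multiplier_eq_1) auto
  then show ?thesis using D lat gen w by simp
qed

lemma minimal_fano_pyramid_normal_form:
  fixes w a p q :: "real^3"
  assumes "minimal_fano {w, a, a + p, a + p + q, a + q}"
    and "distinct [w, a, a + p, a + p + q, a + q]"
    and "cross3 p q \<noteq> 0"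
  shows "\<exists>A\<in>GL3Z. (\<lambda>x. A *v x) ` (convex hull {w, a, a + p, a + p + q, a + q}) =
           convex hull {vector [1,0,0], vector [0,1,0], vector [-1,-1,0],
                        vector [1,1,1], vector [0,0,-1]}"
proof -
  note shape = minimal_fano_pyramid_basis_apex[OF assms]
  define A where "A = basis_map a p q (vector [1,0,0]) (vector [0,1,1]) (vector [-1,0,-1])"
  have "A \<in> GL3Z"
    unfolding A_def using shape
    by (intro basis_map_in_GL3Z) (auto simp: lattice3_def forall_3 cross3_simps)
  have A: "A *v (k0 *\<^sub>R a + k1 *\<^sub>R p + k2 *\<^sub>R q) = vector [k0 - k2, k1, k1 - k2]" for k0 k1 k2
    using shape by (simp add: A_def basis_map_combination vec_eq_iff forall_3)
  have "A *v w = vector [-1,-1,0]" using A[of "-2" "-1" "-1"] shape by simp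
  moreover have "A *v a = vector [1,0,0]" using A[of 1 0 0] by simp
  moreover have "A *v (a + p) = vector [1,1,1]" using A[of 1 1 0] by simp
  moreover have "A *v (a + p + q) = vector [0,1,0]" using A[of 1 1 1] by simp
  moreover have "A *v (a + q) = vector [0,0,-1]" using A[of 1 0 1] by simp
  ultimately have "(\<lambda>x. A *v x) ` {w, a, a + p, a + p + q, a + q} = {vector [1,0,0], vector [0,1,0],
      vector [-1,-1,0], vector [1,1,1], vector [0,0,-1]}"
    by auto
  then show ?thesis
    using \<open>A \<in> GL3Z\<close> convex_hull_linear_image[OF matrix_vector_mul_linear] by metis
qed

lemma parallelogram_cross3_neq_0:
  assumes "parallelogram a b c d"
  shows "cross3 (b - a) (d - a) \<noteq> 0"
proof
  assume "cross3 (b - a) (d - a) = 0"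
  moreover have "c - b = d - a" using assms by (simp add: parallelogram_def algebra_simps)
  ultimately have "cross3 (a - b) (c - b) = 0" using cross_minus_left[of "b - a" "d - a"] by simp
  then have "collinear {a, b, c}" using collinear_3[of a b c] cross_eq_0 by simp
  then show False using assms by (simp add: parallelogram_def)
qed

theorem lemma4p5:
  fixes x1 x2 x3 x4 x5 :: "real^3"
  assumes "card {x1, x2, x3, x4, x5} = 5"
    and "minimal_fano {x1, x2, x3, x4, x5}"
    and "coplanar {x2, x3, x4, x5}"
    and "\<exists>a b c d. {x2, x3, x4, x5} = {a, b, c, d} \<and> parallelogram a b c d"
  shows "\<exists>A\<in>GL3Z. (\<lambda>x. A *v x) ` (convex hull {x1, x2, x3, x4, x5}) =
           convex hull {vector [1,0,0], vector [0,1,0], vector [-1,-1,0],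
                        vector [1,1,1], vector [0,0,-1]}"
proof -
  obtain a b c d where abcd: "{x2, x3, x4, x5} = {a, b, c, d}" and par: "parallelogram a b c d"
    using assms(4) by blast
  define p q where "p = b - a" and "q = d - a"
  have "c = a + p + q" using par by (simp add: parallelogram_def p_def q_def algebra_simps)
  then have V: "{x1, x2, x3, x4, x5} = {x1, a, a + p, a + p + q, a + q}"
    using abcd by (auto simp: p_def q_def)
  have "distinct [x1, a, a + p, a + p + q, a + q]"
    using assms(1) unfolding V by (intro card_distinct) simp
  moreover have "cross3 p q \<noteq> 0" unfolding p_def q_def using par by (rule parallelogram_cross3_neq_0)
  ultimately show ?thesis
    using assms(2) unfolding V by (intro minimal_fano_pyramid_normal_form)
qed

end
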